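(* Let $\mathsf{T}$ be a rooted plane tree and $\delta\in\mathcal{O}(\mathsf{T})$. For all $v\in\mathsf{T}$, we have $\mathsf{Pop}(\delta)(v)\subseteq\delta(v)$. Moreover, for each child $u$ of $v$ with $u\in\delta(v)$, we have $|\Delta_{\mathsf{Pop}(\delta)(v)}(u)|\leq|\Delta_{\delta(v)}(u)|-1$.
   Context: A rooted plane tree $\mathsf{T}$ is a finite tree with a distinguished root, regarded as a poset $\leq_\mathsf{T}$ in which $v'\leq_\mathsf{T} v$ iff $v$ lies on the path from $v'$ to the root; the children of $v$ are the nodes covered by $v$. An ornament is a nonempty set of nodes inducing a connected subgraph. For a set $S$ of nodes and a node $u$, $\Delta_S(u)=\{w\in S:w\leq_\mathsf{T} u\}$ (empty if no such $w$). An ornamentation is a map $\delta$ from $\mathsf{T}$ to ornaments such that the unique maximal element of $\delta(v)$ is $v$ and any two sets $\delta(v),\delta(v')$ are nested or disjoint. $\mathcal{O}(\mathsf{T})$ is the set of ornamentations ordered by $\delta\leq\delta'$ iff $\delta(v)\subseteq\delta'(v)$ for all $v$; it is a lattice with meet given by pointwise intersection. $\mathsf{Pop}(\delta)=\bigwedge(\{\delta\}\cup\{\delta':\delta'\lessdot\delta\})$, where $\lessdot$ is the cover relation. *)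

theory Defs
  imports Main
begin

text \<open>A rooted tree on the finite node set V with root r is given by a parent map
  par (with the convention par r = r); every node reaches the root by iterating par.\<close>

definition rooted_tree :: "'a set \<Rightarrow> 'a \<Rightarrow> ('a \<Rightarrow> 'a) \<Rightarrow> bool" where
  "rooted_tree V r par \<longleftrightarrow> finite V \<and> r \<in> V \<and> par r = r \<and>
     (\<forall>v\<in>V. par v \<in> V) \<and> (\<forall>v\<in>V. \<exists>k. (par ^^ k) v = r)"

definition tree_le :: "('a \<Rightarrow> 'a) \<Rightarrow> 'a \<Rightarrow> 'a \<Rightarrow> bool" where
  "tree_le par v' v \<longleftrightarrow> (\<exists>k. (par ^^ k) v' = v)"

definition is_child :: "'a set \<Rightarrow> 'a \<Rightarrow> ('a \<Rightarrow> 'a) \<Rightarrow> 'a \<Rightarrow> 'a \<Rightarrow> bool" where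
  "is_child V r par u v \<longleftrightarrow> u \<in> V \<and> u \<noteq> r \<and> par u = v"

definition adj_in :: "'a set \<Rightarrow> 'a \<Rightarrow> ('a \<Rightarrow> 'a) \<Rightarrow> 'a set \<Rightarrow> 'a \<Rightarrow> 'a \<Rightarrow> bool" where
  "adj_in V r par S x y \<longleftrightarrow> x \<in> S \<and> y \<in> S \<and> (is_child V r par x y \<or> is_child V r par y x)"

definition ornament :: "'a set \<Rightarrow> 'a \<Rightarrow> ('a \<Rightarrow> 'a) \<Rightarrow> 'a set \<Rightarrow> bool" where
  "ornament V r par S \<longleftrightarrow> S \<noteq> {} \<and> S \<subseteq> V \<and>
     (\<forall>x\<in>S. \<forall>y\<in>S. (adj_in V r par S)\<^sup>*\<^sup>* x y)"

definition Delta :: "('a \<Rightarrow> 'a) \<Rightarrow> 'a set \<Rightarrow> 'a \<Rightarrow> 'a set" where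
  "Delta par S u = {w \<in> S. tree_le par w u}"

text \<open>Ornamentations; functions are taken to be {} outside V so that they are determined
  by their values on the tree.\<close>
definition ornamentation :: "'a set \<Rightarrow> 'a \<Rightarrow> ('a \<Rightarrow> 'a) \<Rightarrow> ('a \<Rightarrow> 'a set) \<Rightarrow> bool" where
  "ornamentation V r par \<delta> \<longleftrightarrow>
     (\<forall>v. v \<notin> V \<longrightarrow> \<delta> v = {}) \<and>
     (\<forall>v\<in>V. ornament V r par (\<delta> v) \<and>
        {m \<in> \<delta> v. \<forall>w\<in>\<delta> v. tree_le par m w \<longrightarrow> w = m} = {v}) \<and>
     (\<forall>v\<in>V. \<forall>v'\<in>V. \<delta> v \<subseteq> \<delta> v' \<or> \<delta> v' \<subseteq> \<delta> v \<or> \<delta> v \<inter> \<delta> v' = {})"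

definition orn_le :: "'a set \<Rightarrow> ('a \<Rightarrow> 'a set) \<Rightarrow> ('a \<Rightarrow> 'a set) \<Rightarrow> bool" where
  "orn_le V \<delta> \<delta>' \<longleftrightarrow> (\<forall>v\<in>V. \<delta> v \<subseteq> \<delta>' v)"

definition orn_covered :: "'a set \<Rightarrow> 'a \<Rightarrow> ('a \<Rightarrow> 'a) \<Rightarrow> ('a \<Rightarrow> 'a set) \<Rightarrow> ('a \<Rightarrow> 'a set) \<Rightarrow> bool" where
  "orn_covered V r par \<delta>' \<delta> \<longleftrightarrow>
     ornamentation V r par \<delta>' \<and> ornamentation V r par \<delta> \<and>
     orn_le V \<delta>' \<delta> \<and> \<not> orn_le V \<delta> \<delta>' \<and>
     \<not> (\<exists>\<delta>''. ornamentation V r par \<delta>'' \<and> orn_le V \<delta>' \<delta>'' \<and> orn_le V \<delta>'' \<delta> \<and>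
            \<not> orn_le V \<delta>'' \<delta>' \<and> \<not> orn_le V \<delta> \<delta>'')"

text \<open>Pop: meet of \<delta> and all elements it covers; the meet in O(T) is pointwise intersection.\<close>
definition Pop :: "'a set \<Rightarrow> 'a \<Rightarrow> ('a \<Rightarrow> 'a) \<Rightarrow> ('a \<Rightarrow> 'a set) \<Rightarrow> 'a \<Rightarrow> 'a set" where
  "Pop V r par \<delta> v = \<Inter> {\<delta>' v | \<delta>'. \<delta>' = \<delta> \<or> orn_covered V r par \<delta>' \<delta>}"

end

theory Submission
  imports Defs
begin

text \<open>Let \<open>u\<close> be a child of \<open>v\<close> lying in \<open>\<delta> v\<close>. Cutting the branch below \<open>u\<close> off the ornament
  \<open>\<delta> v\<close> keeps it connected (the only edge leaving the branch is \<open>u\<close>--\<open>v\<close>) and keeps the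
  nesting property (an ornament meeting the branch and its complement contains \<open>v\<close>, so it
  contains \<open>\<delta> v\<close>). This gives an ornamentation strictly below \<open>\<delta>\<close> that differs from \<open>\<delta>\<close>
  only inside the branch at \<open>v\<close>. Some ornamentation covered by \<open>\<delta>\<close> lies above it and hence
  also loses a node of the branch at \<open>v\<close>; \<open>Pop(\<delta>)(v)\<close> is contained in it.\<close>

definition subtree :: "('a \<Rightarrow> 'a) \<Rightarrow> 'a \<Rightarrow> 'a set" where
  "subtree par u = {x. tree_le par x u}"

lemma Delta_eq_Int_subtree: "Delta par S u = S \<inter> subtree par u"
  unfolding Delta_def subtree_def by blast

lemma tree_le_refl: "tree_le par x x"
  unfolding tree_le_def by (rule exI[of _ 0]) simp

lemma tree_le_trans: "tree_le par x y \<Longrightarrow> tree_le par y z \<Longrightarrow> tree_le par x z"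
  unfolding tree_le_def by (metis funpow_add comp_apply)

lemma tree_le_parent: "tree_le par x (par x)"
  unfolding tree_le_def by (rule exI[of _ 1]) simp

lemma subtree_self: "u \<in> subtree par u"
  unfolding subtree_def by (simp add: tree_le_refl)

lemma subtree_downward_closed:
  "x \<in> subtree par u \<Longrightarrow> tree_le par y x \<Longrightarrow> y \<in> subtree par u"
  unfolding subtree_def by (blast intro: tree_le_trans)

lemma rooted_tree_parent_in: "rooted_tree V r par \<Longrightarrow> x \<in> V \<Longrightarrow> par x \<in> V"
  unfolding rooted_tree_def by blast

lemma rooted_tree_periodic_imp_root:
  assumes tree: "rooted_tree V r par" and "x \<in> V" and periodic: "(par ^^ Suc k) x = x"
  shows "x = r"
proof -
  obtain m where m: "(par ^^ m) x = r"
    using tree \<open>x \<in> V\<close> unfolding rooted_tree_def by blast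
  have root_fixed: "(par ^^ n) r = r" for n
    using tree unfolding rooted_tree_def by (induction n) auto
  have "((par ^^ Suc k) ^^ m) x = x"
    using periodic by (induction m) auto
  then have "(par ^^ (Suc k * m)) x = x"
    by (simp only: funpow_mult)
  moreover have "Suc k * m = (Suc k * m - m) + m"
    by simp
  ultimately have "x = (par ^^ (Suc k * m - m)) ((par ^^ m) x)"
    by (metis funpow_add comp_apply)
  then show ?thesis
    using m root_fixed by simp
qed

lemma is_child_not_above:
  assumes "rooted_tree V r par" and "is_child V r par u v"
  shows "\<not> tree_le par v u"
proof
  assume "tree_le par v u"
  then obtain k where "(par ^^ k) v = u"
    unfolding tree_le_def by blast
  then have "(par ^^ Suc k) u = u"
    using assms(2) unfolding is_child_def by (simp add: funpow_Suc_right del: funpow.simps)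
  then show False
    using rooted_tree_periodic_imp_root[OF assms(1)] assms(2) unfolding is_child_def by blast
qed

lemma edge_leaving_subtree:
  assumes "par u = v" and "x \<in> subtree par u" and "y \<notin> subtree par u"
    and "par x = y \<or> par y = x"
  shows "x = u \<and> y = v"
proof -
  have "par x = y"
    using assms(2-4) tree_le_parent subtree_downward_closed by metis
  obtain k where k: "(par ^^ k) x = u"
    using assms(2) unfolding subtree_def tree_le_def by blast
  show ?thesis
  proof (cases k)
    case 0
    then show ?thesis using k \<open>par x = y\<close> assms(1) by simp
  next
    case (Suc j)
    then have "(par ^^ j) y = u"
      using k \<open>par x = y\<close> by (simp add: funpow_Suc_right del: funpow.simps)
    then show ?thesis
      using assms(3) unfolding subtree_def tree_le_def by blast
  qed
qed

lemma adj_in_parent: "adj_in V r par S x y \<Longrightarrow> par x = y \<or> par y = x"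
  unfolding adj_in_def is_child_def by blast

lemma symp_adj_in: "symp (adj_in V r par S)"
  unfolding adj_in_def by (auto intro: sympI)

lemma path_leaving_subtree_contains_parent:
  assumes "(adj_in V r par S)\<^sup>*\<^sup>* a b" and "a \<in> subtree par u" and "b \<notin> subtree par u"
    and "par u = v"
  shows "v \<in> S"
  using assms(1-3)
proof (induction rule: rtranclp_induct)
  case base
  then show ?case by simp
next
  case (step y z)
  show ?case
  proof (cases "y \<in> subtree par u")
    case True
    then have "z = v"
      using edge_leaving_subtree[OF assms(4) True step(5)] adj_in_parent[OF step(2)] by blast
    then show ?thesis
      using step(2) unfolding adj_in_def by blast
  qed (use step in blast)
qed

lemma path_to_parent_avoids_subtree:
  assumes "(adj_in V r par S)\<^sup>*\<^sup>* x v" and "x \<notin> subtree par u" and "par u = v"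
  shows "(adj_in V r par (S - subtree par u))\<^sup>*\<^sup>* x v"
  using assms(1,2)
proof (induction rule: converse_rtranclp_induct)
  case base
  then show ?case by simp
next
  case (step x y)
  show ?case
  proof (cases "y \<in> subtree par u")
    case False
    then have "adj_in V r par (S - subtree par u) x y"
      using step(1,4) unfolding adj_in_def by blast
    then show ?thesis
      using step(3)[OF False] by (rule converse_rtranclp_into_rtranclp)
  next
    case True
    \<comment> \<open>the path can only enter the branch along the edge \<open>v\<close>--\<open>u\<close>, i.e.\ it is already at \<open>v\<close>\<close>
    then have "x = v"
      using edge_leaving_subtree[OF assms(3) True step(4)] adj_in_parent[OF step(1)] by blast
    then show ?thesis by simp
  qed
qed

lemma ornament_Diff_subtree:
  assumes "ornament V r par S" and "v \<in> S" and "v \<notin> subtree par u" and "par u = v"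
  shows "ornament V r par (S - subtree par u)"
proof -
  have to_v: "(adj_in V r par (S - subtree par u))\<^sup>*\<^sup>* x v" if "x \<in> S - subtree par u" for x
  proof -
    have "(adj_in V r par S)\<^sup>*\<^sup>* x v"
      using assms(1,2) that unfolding ornament_def by blast
    with that assms(4) show ?thesis
      by (simp add: path_to_parent_avoids_subtree)
  qed
  have "(adj_in V r par (S - subtree par u))\<^sup>*\<^sup>* x y"
    if "x \<in> S - subtree par u" "y \<in> S - subtree par u" for x y
    using to_v[OF that(1)] sympD[OF symp_rtranclp[OF symp_adj_in] to_v[OF that(2)]]
    by (rule rtranclp_trans)
  then show ?thesis
    using assms(1-3) unfolding ornament_def by blast
qed

lemma maximal_Diff_subtree:
  assumes "{m \<in> S. \<forall>w\<in>S. tree_le par m w \<longrightarrow> w = m} = {v}" and "v \<notin> subtree par u"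
  shows "{m \<in> S - subtree par u. \<forall>w\<in>S - subtree par u. tree_le par m w \<longrightarrow> w = m} = {v}"
proof -
  have "{m \<in> S - subtree par u. \<forall>w\<in>S - subtree par u. tree_le par m w \<longrightarrow> w = m} =
      {m \<in> S. \<forall>w\<in>S. tree_le par m w \<longrightarrow> w = m} - subtree par u"
    by (auto dest: subtree_downward_closed)
  with assms show ?thesis
    by blast
qed

lemma ornamentation_cut_subtree:
  assumes tree: "rooted_tree V r par" and orn: "ornamentation V r par \<delta>"
    and child: "is_child V r par u v"
  shows "ornamentation V r par (\<delta>(v := \<delta> v - subtree par u))"
proof -
  have "v \<in> V" and pu: "par u = v"
    using child rooted_tree_parent_in[OF tree] unfolding is_child_def by auto
  have outside: "\<And>w. w \<notin> V \<Longrightarrow> \<delta> w = {}"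
    and ornament: "\<And>w. w \<in> V \<Longrightarrow> ornament V r par (\<delta> w)"
    and maximal: "\<And>w. w \<in> V \<Longrightarrow> {m \<in> \<delta> w. \<forall>x\<in>\<delta> w. tree_le par m x \<longrightarrow> x = m} = {w}"
    and nested: "\<And>w w'. w \<in> V \<Longrightarrow> w' \<in> V \<Longrightarrow>
      \<delta> w \<subseteq> \<delta> w' \<or> \<delta> w' \<subseteq> \<delta> w \<or> \<delta> w \<inter> \<delta> w' = {}"
    using orn unfolding ornamentation_def by blast+
  have v_out: "v \<notin> subtree par u"
    using is_child_not_above[OF tree child] unfolding subtree_def by blast
  have "v \<in> \<delta> v"
    using maximal[OF \<open>v \<in> V\<close>] by blast
  have cut_ornament: "ornament V r par (\<delta> v - subtree par u)"
    using ornament_Diff_subtree[OF ornament[OF \<open>v \<in> V\<close>] \<open>v \<in> \<delta> v\<close> v_out pu] .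
  have cut_nested: "\<delta> w \<subseteq> \<delta> v - subtree par u \<or> \<delta> v - subtree par u \<subseteq> \<delta> w \<or>
      \<delta> w \<inter> (\<delta> v - subtree par u) = {}" if "w \<in> V" "w \<noteq> v" for w
  proof (rule ccontr)
    assume split: "\<not> ?thesis"
    with nested[OF \<open>v \<in> V\<close> \<open>w \<in> V\<close>] have "\<delta> w \<subseteq> \<delta> v"
      by blast
    with split obtain a b where a: "a \<in> \<delta> w" "a \<in> subtree par u"
      and b: "b \<in> \<delta> w" "b \<notin> subtree par u"
      by blast
    \<comment> \<open>so \<open>\<delta> w\<close> contains \<open>v\<close>, which is maximal in \<open>\<delta> v \<supseteq> \<delta> w\<close>, forcing \<open>w = v\<close>\<close>
    have "(adj_in V r par (\<delta> w))\<^sup>*\<^sup>* a b"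
      using ornament[OF \<open>w \<in> V\<close>] a(1) b(1) unfolding ornament_def by blast
    then have "v \<in> \<delta> w"
      using a(2) b(2) pu by (rule path_leaving_subtree_contains_parent)
    moreover have "\<forall>x\<in>\<delta> w. tree_le par v x \<longrightarrow> x = v"
      using \<open>\<delta> w \<subseteq> \<delta> v\<close> maximal[OF \<open>v \<in> V\<close>] by blast
    ultimately have "v \<in> {m \<in> \<delta> w. \<forall>x\<in>\<delta> w. tree_le par m x \<longrightarrow> x = m}"
      by blast
    then have "w = v"
      using maximal[OF \<open>w \<in> V\<close>] by simp
    with \<open>w \<noteq> v\<close> show False ..
  qed
  show ?thesis
    unfolding ornamentation_def
  proof (intro conjI ballI allI impI)
    fix w
    assume "w \<notin> V"
    then show "(\<delta>(v := \<delta> v - subtree par u)) w = {}"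
      using outside \<open>v \<in> V\<close> by auto
  next
    fix w
    assume "w \<in> V"
    then show "ornament V r par ((\<delta>(v := \<delta> v - subtree par u)) w)"
      using ornament cut_ornament by simp
    show "{m \<in> (\<delta>(v := \<delta> v - subtree par u)) w.
        \<forall>x\<in>(\<delta>(v := \<delta> v - subtree par u)) w. tree_le par m x \<longrightarrow> x = m} = {w}"
      using maximal[OF \<open>w \<in> V\<close>] maximal_Diff_subtree[OF maximal[OF \<open>v \<in> V\<close>] v_out]
      by (cases "w = v") simp_all
  next
    fix w w'
    assume "w \<in> V" "w' \<in> V"
    then show "(\<delta>(v := \<delta> v - subtree par u)) w \<subseteq> (\<delta>(v := \<delta> v - subtree par u)) w' \<or>
      (\<delta>(v := \<delta> v - subtree par u)) w' \<subseteq> (\<delta>(v := \<delta> v - subtree par u)) w \<or>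
      (\<delta>(v := \<delta> v - subtree par u)) w \<inter> (\<delta>(v := \<delta> v - subtree par u)) w' = {}"
      using nested[OF \<open>w \<in> V\<close> \<open>w' \<in> V\<close>] cut_nested[OF \<open>w \<in> V\<close>] cut_nested[OF \<open>w' \<in> V\<close>]
      by (cases "w = v"; cases "w' = v") (auto simp: Int_commute)
  qed
qed

lemma ornamentation_subset: "ornamentation V r par \<delta> \<Longrightarrow> \<delta> w \<subseteq> V"
  unfolding ornamentation_def ornament_def by (cases "w \<in> V") auto

definition orn_weight :: "'a set \<Rightarrow> ('a \<Rightarrow> 'a set) \<Rightarrow> nat" where
  "orn_weight V \<delta> = (\<Sum>w\<in>V. card (\<delta> w))"

lemma orn_weight_le:
  assumes "finite V" and "ornamentation V r par \<delta>"
  shows "orn_weight V \<delta> \<le> card V * card V"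
proof -
  have "card (\<delta> w) \<le> card V" for w
    using card_mono[OF assms(1) ornamentation_subset[OF assms(2)]] .
  then show ?thesis
    unfolding orn_weight_def using sum_bounded_above[of V "\<lambda>w. card (\<delta> w)" "card V"] by simp
qed

lemma orn_weight_strict_mono:
  assumes "finite V" and "ornamentation V r par \<delta>'"
    and "orn_le V \<delta> \<delta>'" and "\<not> orn_le V \<delta>' \<delta>"
  shows "orn_weight V \<delta> < orn_weight V \<delta>'"
  unfolding orn_weight_def
proof (rule sum_strict_mono_ex1[OF assms(1)])
  have fin: "finite (\<delta>' w)" for w
    using ornamentation_subset[OF assms(2)] assms(1) by (rule finite_subset)
  show "\<forall>w\<in>V. card (\<delta> w) \<le> card (\<delta>' w)"
    using assms(3) fin unfolding orn_le_def by (blast intro: card_mono)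
  show "\<exists>w\<in>V. card (\<delta> w) < card (\<delta>' w)"
    using assms(3,4) fin unfolding orn_le_def by (blast intro: psubset_card_mono)
qed

lemma ex_orn_covered_above:
  assumes "finite V" and "ornamentation V r par \<delta>'" and "ornamentation V r par \<delta>"
    and "orn_le V \<delta>' \<delta>" and "\<not> orn_le V \<delta> \<delta>'"
  shows "\<exists>\<epsilon>. orn_covered V r par \<epsilon> \<delta> \<and> orn_le V \<delta>' \<epsilon>"
proof -
  define between where "between \<epsilon> \<longleftrightarrow> ornamentation V r par \<epsilon> \<and> orn_le V \<delta>' \<epsilon> \<and>
    orn_le V \<epsilon> \<delta> \<and> \<not> orn_le V \<delta> \<epsilon>" for \<epsilon>
  have "between \<delta>'"
    using assms(2,4,5) unfolding between_def orn_le_def by blast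
  moreover have "\<forall>\<epsilon>. between \<epsilon> \<longrightarrow> orn_weight V \<epsilon> < card V * card V + 1"
    unfolding between_def by (auto dest: orn_weight_le[OF assms(1)])
  ultimately obtain \<epsilon> where \<epsilon>: "between \<epsilon>"
    and heaviest: "\<forall>\<epsilon>'. between \<epsilon>' \<longrightarrow> orn_weight V \<epsilon>' \<le> orn_weight V \<epsilon>"
    using ex_has_greatest_nat[of between] by blast
  have "orn_covered V r par \<epsilon> \<delta>"
    unfolding orn_covered_def
  proof (intro conjI)
    show "ornamentation V r par \<epsilon>" "orn_le V \<epsilon> \<delta>" "\<not> orn_le V \<delta> \<epsilon>"
      using \<epsilon> unfolding between_def by auto
    show "ornamentation V r par \<delta>" by (rule assms(3))
  next
    show "\<not> (\<exists>\<epsilon>'. ornamentation V r par \<epsilon>' \<and> orn_le V \<epsilon> \<epsilon>' \<and> orn_le V \<epsilon>' \<delta> \<and>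
      \<not> orn_le V \<epsilon>' \<epsilon> \<and> \<not> orn_le V \<delta> \<epsilon>')"
    proof
      assume "\<exists>\<epsilon>'. ornamentation V r par \<epsilon>' \<and> orn_le V \<epsilon> \<epsilon>' \<and> orn_le V \<epsilon>' \<delta> \<and>
        \<not> orn_le V \<epsilon>' \<epsilon> \<and> \<not> orn_le V \<delta> \<epsilon>'"
      then obtain \<epsilon>' where "ornamentation V r par \<epsilon>'" "orn_le V \<epsilon> \<epsilon>'" "orn_le V \<epsilon>' \<delta>"
        "\<not> orn_le V \<epsilon>' \<epsilon>" "\<not> orn_le V \<delta> \<epsilon>'"
        by blast
      moreover from this \<epsilon> have "between \<epsilon>'"
        unfolding between_def orn_le_def by blast
      ultimately show False
        using heaviest orn_weight_strict_mono[OF assms(1)] by (meson leD)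
    qed
  qed
  then show ?thesis
    using \<epsilon> unfolding between_def by blast
qed

lemma Pop_subset: "Pop V r par \<delta> v \<subseteq> \<delta> v"
  unfolding Pop_def by blast

lemma Pop_subset_covered: "orn_covered V r par \<epsilon> \<delta> \<Longrightarrow> Pop V r par \<delta> v \<subseteq> \<epsilon> v"
  unfolding Pop_def by blast

lemma between_cut_and_original_loses_cut_part:
  assumes "orn_le V (\<delta>(v := \<delta> v - B)) \<epsilon>" and "orn_le V \<epsilon> \<delta>" and "\<not> orn_le V \<delta> \<epsilon>"
    and "v \<in> V"
  shows "\<epsilon> v \<inter> B \<subset> \<delta> v \<inter> B"
proof -
  from assms(3) obtain w x where "w \<in> V" "x \<in> \<delta> w" "x \<notin> \<epsilon> w"
    unfolding orn_le_def by blast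
  moreover have "\<delta> w \<subseteq> \<epsilon> w" if "w \<in> V" "w \<noteq> v" for w
    using assms(1) that unfolding orn_le_def by (metis fun_upd_other)
  ultimately have "w = v" by blast
  have "\<delta> v - B \<subseteq> \<epsilon> v"
    using assms(1,4) unfolding orn_le_def by (metis fun_upd_same)
  moreover have "\<epsilon> v \<subseteq> \<delta> v"
    using assms(2,4) unfolding orn_le_def by blast
  ultimately show ?thesis
    using \<open>x \<in> \<delta> w\<close> \<open>x \<notin> \<epsilon> w\<close> \<open>w = v\<close> by blast
qed

theorem lemma2p6:
  fixes V :: "'a set" and r :: 'a and par :: "'a \<Rightarrow> 'a" and \<delta> :: "'a \<Rightarrow> 'a set" and v :: 'a
  assumes "rooted_tree V r par"
    and "ornamentation V r par \<delta>"
    and "v \<in> V"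
  shows "Pop V r par \<delta> v \<subseteq> \<delta> v \<and>
    (\<forall>u. is_child V r par u v \<and> u \<in> \<delta> v \<longrightarrow>
       card (Delta par (Pop V r par \<delta> v) u) \<le> card (Delta par (\<delta> v) u) - 1)"
proof (intro conjI allI impI Pop_subset)
  fix u
  assume "is_child V r par u v \<and> u \<in> \<delta> v"
  then have child: "is_child V r par u v" and "u \<in> \<delta> v"
    by blast+
  define \<delta>' where "\<delta>' = \<delta>(v := \<delta> v - subtree par u)"
  have fin: "finite V"
    using assms(1) unfolding rooted_tree_def by blast
  have "ornamentation V r par \<delta>'"
    unfolding \<delta>'_def by (rule ornamentation_cut_subtree[OF assms(1,2) child])
  moreover have "orn_le V \<delta>' \<delta>" and "\<not> orn_le V \<delta> \<delta>'"
    using \<open>u \<in> \<delta> v\<close> subtree_self[of u par] assms(3) unfolding \<delta>'_def orn_le_def by auto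
  ultimately obtain \<epsilon> where cov: "orn_covered V r par \<epsilon> \<delta>" and "orn_le V \<delta>' \<epsilon>"
    using ex_orn_covered_above[OF fin _ assms(2)] by blast
  then have lost: "\<epsilon> v \<inter> subtree par u \<subset> \<delta> v \<inter> subtree par u"
    using between_cut_and_original_loses_cut_part[OF _ _ _ assms(3)]
    unfolding \<delta>'_def orn_covered_def by blast
  have "finite (\<delta> v \<inter> subtree par u)"
    using ornamentation_subset[OF assms(2)] fin by (meson finite_Int finite_subset)
  have "card (Pop V r par \<delta> v \<inter> subtree par u) \<le> card (\<epsilon> v \<inter> subtree par u)"
    using Pop_subset_covered[OF cov] lost \<open>finite (\<delta> v \<inter> subtree par u)\<close>
    by (meson Int_mono card_mono finite_subset order.refl psubset_imp_subset)
  also have "\<dots> < card (\<delta> v \<inter> subtree par u)"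
    using \<open>finite (\<delta> v \<inter> subtree par u)\<close> lost by (rule psubset_card_mono)
  finally have "card (Pop V r par \<delta> v \<inter> subtree par u) < card (\<delta> v \<inter> subtree par u)" .
  then show "card (Delta par (Pop V r par \<delta> v) u) \<le> card (Delta par (\<delta> v) u) - 1"
    unfolding Delta_eq_Int_subtree by linarith
qed

end
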